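(* Let $p\in[1,\infty]$, $d\in\mathbb N$, $m_0:=d$, $m_1\le m_2\le\cdots$ positive integers, $\mathbf W_n\in\mathbb R^{m_n\times m_{n-1}}$ and $\mathbf b_n\in\mathbb R^{m_n}$ for $n\in\mathbb N$. Suppose that for every sequence $(J_n)_{n\in\mathbb N}$ with $J_n\in\mathcal D_{m_n}$ both limits $$\lim_{n\to\infty}\mathbf I_{\infty,m_n}\prod_{i=1}^nJ_i\mathbf W_i \ \text{ in } \mathcal B(\mathbb R^d,\ell^p)\qquad\text{and}\qquad \lim_{n\to\infty}\mathbf I_{\infty,m_n}\sum_{i=1}^n\Big(\prod_{k=i+1}^nJ_k\mathbf W_k\Big)J_i\mathbf b_i\ \text{ in }\ell^p$$ exist. Then the ReLU networks $\mathcal N_n$ converge pointwise on $[0,1]^d$, i.e. for each $x\in[0,1]^d$ the sequence $\tilde{\mathcal N}_n(x)$ converges in $\ell^p$.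
   Context: $\sigma(t)=\max(t,0)$ applied componentwise; $\mathcal N_n(x):=\big(\sigma(\mathbf W_n\cdot+\mathbf b_n)\circ\cdots\circ\sigma(\mathbf W_1\cdot+\mathbf b_1)\big)(x)\in\mathbb R^{m_n}$ for $x\in[0,1]^d$, and $\tilde{\mathcal N}_n(x)\in\ell^p$ is the sequence whose first $m_n$ entries are those of $\mathcal N_n(x)$ and whose remaining entries are $0$. $\mathcal D_m$ is the set of $m\times m$ diagonal matrices with diagonal entries in $\{0,1\}$. $\mathbf I_{\infty,m}$ is the matrix with infinitely many rows and $m$ columns whose top $m\times m$ block is the identity and all other entries zero (the embedding $\mathbb R^m\to\ell^p$). $\mathcal B(\mathbb R^d,\ell^p)$ is the Banach space of bounded linear operators $\mathbb R^d\to\ell^p$ with operator norm induced by $\ell^p$ norms. Products are ordered $\prod_{i=k}^nA_i=A_n\cdots A_k$, and an empty product ($n<k$) is the $m_n\times m_n$ identity. *)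

theory Defs
  imports "HOL-Analysis.Analysis"
begin

text \<open>Real sequences (elements of R^nat), matrices with rows/columns indexed by nat.
  Finite vectors/matrices are represented by functions on nat with explicit size bounds.\<close>

definition relu :: "real \<Rightarrow> real" where
  "relu t = max t 0"

text \<open>Embedding I_{infty,k}: keep the first k entries, zero out the rest.\<close>
definition emb :: "nat \<Rightarrow> (nat \<Rightarrow> real) \<Rightarrow> (nat \<Rightarrow> real)" where
  "emb k v = (\<lambda>i. if i < k then v i else 0)"

definition embM :: "nat \<Rightarrow> (nat \<Rightarrow> nat \<Rightarrow> real) \<Rightarrow> (nat \<Rightarrow> nat \<Rightarrow> real)" where
  "embM k A = (\<lambda>i j. if i < k then A i j else 0)"

definition lp_norm :: "ereal \<Rightarrow> (nat \<Rightarrow> real) \<Rightarrow> real" where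
  "lp_norm p x = (if p = \<infinity> then Sup (range (\<lambda>i. \<bar>x i\<bar>))
     else (\<Sum>i. \<bar>x i\<bar> powr real_of_ereal p) powr (1 / real_of_ereal p))"

definition in_lp :: "ereal \<Rightarrow> (nat \<Rightarrow> real) \<Rightarrow> bool" where
  "in_lp p x = (if p = \<infinity> then bdd_above (range (\<lambda>i. \<bar>x i\<bar>))
     else summable (\<lambda>i. \<bar>x i\<bar> powr real_of_ereal p))"

definition lp_converges :: "ereal \<Rightarrow> (nat \<Rightarrow> nat \<Rightarrow> real) \<Rightarrow> bool" where
  "lp_converges p X = (\<exists>y. in_lp p y \<and> (\<lambda>n. lp_norm p (\<lambda>i. X n i - y i)) \<longlonglongrightarrow> 0)"

definition op_norm :: "ereal \<Rightarrow> nat \<Rightarrow> (nat \<Rightarrow> nat \<Rightarrow> real) \<Rightarrow> real" where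
  "op_norm p d A = Sup {lp_norm p (\<lambda>i. \<Sum>j<d. A i j * v j) | v. lp_norm p (emb d v) \<le> 1}"

text \<open>Convergence in B(R^d, l^p): the limit is a bounded operator, i.e. a matrix whose
  d columns lie in l^p.\<close>
definition op_converges :: "ereal \<Rightarrow> nat \<Rightarrow> (nat \<Rightarrow> nat \<Rightarrow> nat \<Rightarrow> real) \<Rightarrow> bool" where
  "op_converges p d X = (\<exists>L. (\<forall>j<d. in_lp p (\<lambda>i. L i j)) \<and>
      (\<lambda>n. op_norm p d (\<lambda>i j. X n i j - L i j)) \<longlonglongrightarrow> 0)"

definition matmul :: "nat \<Rightarrow> (nat \<Rightarrow> nat \<Rightarrow> real) \<Rightarrow> (nat \<Rightarrow> nat \<Rightarrow> real) \<Rightarrow> (nat \<Rightarrow> nat \<Rightarrow> real)" where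
  "matmul k A B = (\<lambda>i j. \<Sum>l<k. A i l * B l j)"

definition matvec :: "nat \<Rightarrow> (nat \<Rightarrow> nat \<Rightarrow> real) \<Rightarrow> (nat \<Rightarrow> real) \<Rightarrow> (nat \<Rightarrow> real)" where
  "matvec k A v = (\<lambda>i. \<Sum>l<k. A i l * v l)"

definition idM :: "nat \<Rightarrow> (nat \<Rightarrow> nat \<Rightarrow> real)" where
  "idM k = (\<lambda>i j. if i = j \<and> i < k then 1 else 0)"

definition diagM :: "nat \<Rightarrow> (nat \<Rightarrow> real) \<Rightarrow> (nat \<Rightarrow> nat \<Rightarrow> real)" where
  "diagM k J = (\<lambda>i j. if i = j \<and> i < k then J i else 0)"

text \<open>prodR m W J k n = prod_{l=k}^n J_l W_l  (= J_n W_n ... J_k W_k), an m_n x m_{k-1} matrix;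
  the empty product (n < k) is the m_n x m_n identity. Only used with k \<ge> 1.\<close>
fun prodR :: "(nat \<Rightarrow> nat) \<Rightarrow> (nat \<Rightarrow> nat \<Rightarrow> nat \<Rightarrow> real) \<Rightarrow> (nat \<Rightarrow> nat \<Rightarrow> real)
     \<Rightarrow> nat \<Rightarrow> nat \<Rightarrow> (nat \<Rightarrow> nat \<Rightarrow> real)" where
  "prodR m W J k 0 = idM (m 0)"
| "prodR m W J k (Suc n) = (if Suc n < k then idM (m (Suc n))
     else matmul (m (Suc n)) (diagM (m (Suc n)) (J (Suc n)))
            (matmul (m n) (W (Suc n)) (prodR m W J k n)))"

definition biasSum :: "(nat \<Rightarrow> nat) \<Rightarrow> (nat \<Rightarrow> nat \<Rightarrow> nat \<Rightarrow> real) \<Rightarrow> (nat \<Rightarrow> nat \<Rightarrow> real)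
     \<Rightarrow> (nat \<Rightarrow> nat \<Rightarrow> real) \<Rightarrow> nat \<Rightarrow> (nat \<Rightarrow> real)" where
  "biasSum m W b J n = (\<lambda>r. \<Sum>i\<in>{1..n}.
      matvec (m i) (prodR m W J (i + 1) n) (matvec (m i) (diagM (m i) (J i)) (b i)) r)"

text \<open>ReLU network N_n(x) in R^{m_n}, embedded into sequences (tilde N_n); N_0 x = x.\<close>
fun net :: "(nat \<Rightarrow> nat) \<Rightarrow> (nat \<Rightarrow> nat \<Rightarrow> nat \<Rightarrow> real) \<Rightarrow> (nat \<Rightarrow> nat \<Rightarrow> real)
     \<Rightarrow> nat \<Rightarrow> (nat \<Rightarrow> real) \<Rightarrow> (nat \<Rightarrow> real)" where
  "net m W b 0 x = emb (m 0) x"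
| "net m W b (Suc n) x = emb (m (Suc n))
     (\<lambda>i. relu ((\<Sum>k<m n. W (Suc n) i k * net m W b n x k) + b (Suc n) i))"

end

theory Submission
  imports Defs
begin

text \<open>Fix an input x and let J record which ReLU units fire at x. Along this single
  activation pattern every layer acts as the affine map z \<mapsto> J (W z + b), so by induction
  the network output is the affine expression
  I (prod J_i W_i) x + I sum_i (prod_{k>i} J_k W_k) J_i b_i.
  The hypotheses, applied to this J, make the matrix part converge in operator norm and the
  bias part in l^p; since x is bounded, the affine expression converges in l^p.\<close>

lemma real_of_ereal_ge_1: "1 \<le> p \<Longrightarrow> p \<noteq> \<infinity> \<Longrightarrow> 1 \<le> real_of_ereal p"
  by (cases p) auto

lemma lp_norm_nonneg: "in_lp p x \<Longrightarrow> 0 \<le> lp_norm p x"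
proof (cases "p = \<infinity>")
  case True
  assume "in_lp p x"
  then have "bdd_above (range (\<lambda>i. \<bar>x i\<bar>))" using True by (simp add: in_lp_def)
  then have "\<bar>x 0\<bar> \<le> Sup (range (\<lambda>i. \<bar>x i\<bar>))" by (intro cSUP_upper) auto
  then show ?thesis using True by (simp add: lp_norm_def)
qed (simp add: lp_norm_def)

lemma abs_le_lp_norm:
  assumes p: "1 \<le> p" and x: "in_lp p x"
  shows "\<bar>x i\<bar> \<le> lp_norm p x"
proof (cases "p = \<infinity>")
  case True
  then have "bdd_above (range (\<lambda>i. \<bar>x i\<bar>))" using x by (simp add: in_lp_def)
  then have "\<bar>x i\<bar> \<le> Sup (range (\<lambda>i. \<bar>x i\<bar>))" by (intro cSUP_upper) auto
  then show ?thesis using True by (simp add: lp_norm_def)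
next
  case False
  define q where "q = real_of_ereal p"
  have q: "1 \<le> q" using real_of_ereal_ge_1[OF p False] by (simp add: q_def)
  have "summable (\<lambda>i. \<bar>x i\<bar> powr q)" using x False by (simp add: in_lp_def q_def)
  then have "\<bar>x i\<bar> powr q \<le> (\<Sum>i. \<bar>x i\<bar> powr q)"
    using sum_le_suminf[of _ "{i}"] by fastforce
  then have "(\<bar>x i\<bar> powr q) powr (1/q) \<le> (\<Sum>i. \<bar>x i\<bar> powr q) powr (1/q)"
    using q by (intro powr_mono2) auto
  then show ?thesis using False q by (simp add: lp_norm_def q_def powr_powr)
qed

lemma lp_dominated:
  assumes p: "1 \<le> p" and g: "in_lp p g" and le: "\<And>i. \<bar>f i\<bar> \<le> \<bar>g i\<bar>"
  shows "in_lp p f \<and> lp_norm p f \<le> lp_norm p g"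
proof (cases "p = \<infinity>")
  case True
  then have bdd: "bdd_above (range (\<lambda>i. \<bar>g i\<bar>))" using g by (simp add: in_lp_def)
  have f_le: "\<bar>f i\<bar> \<le> Sup (range (\<lambda>i. \<bar>g i\<bar>))" for i
    using le cSup_upper[OF _ bdd] by (meson order_trans rangeI)
  then have "bdd_above (range (\<lambda>i. \<bar>f i\<bar>))" by (intro bdd_aboveI2) auto
  moreover have "Sup (range (\<lambda>i. \<bar>f i\<bar>)) \<le> Sup (range (\<lambda>i. \<bar>g i\<bar>))"
    using f_le by (intro cSUP_least) auto
  ultimately show ?thesis using True by (simp add: lp_norm_def in_lp_def)
next
  case False
  define q where "q = real_of_ereal p"
  have q: "1 \<le> q" using real_of_ereal_ge_1[OF p False] by (simp add: q_def)
  have sg: "summable (\<lambda>i. \<bar>g i\<bar> powr q)" using g False by (simp add: in_lp_def q_def)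
  have pw: "\<bar>f i\<bar> powr q \<le> \<bar>g i\<bar> powr q" for i using le q by (intro powr_mono2) auto
  have sf: "summable (\<lambda>i. \<bar>f i\<bar> powr q)"
    by (rule summable_comparison_test'[OF sg]) (use pw in auto)
  have "(\<Sum>i. \<bar>f i\<bar> powr q) powr (1/q) \<le> (\<Sum>i. \<bar>g i\<bar> powr q) powr (1/q)"
    using q sf by (intro powr_mono2 suminf_le[OF pw sf sg] suminf_nonneg) auto
  then show ?thesis using False sf by (simp add: lp_norm_def in_lp_def q_def)
qed

lemma in_lp_finite_support:
  assumes p: "1 \<le> p" and zero: "\<And>i. N \<le> i \<Longrightarrow> x i = 0"
  shows "in_lp p x"
proof (cases "p = \<infinity>")
  case True
  have "\<bar>x i\<bar> \<le> (\<Sum>k<N. \<bar>x k\<bar>)" for i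
    by (cases "i < N") (auto intro: member_le_sum simp: zero sum_nonneg)
  then have "bdd_above (range (\<lambda>i. \<bar>x i\<bar>))" by (intro bdd_aboveI2) auto
  then show ?thesis using True by (simp add: in_lp_def)
next
  case False
  have "1 \<le> real_of_ereal p" using real_of_ereal_ge_1[OF p False] .
  then have "summable (\<lambda>i. \<bar>x i\<bar> powr real_of_ereal p)"
    by (intro summable_finite[of "{..<N}"]) (auto simp: zero)
  then show ?thesis using False by (simp add: in_lp_def)
qed

lemma abs_sum_powr_le:
  fixes a :: "nat \<Rightarrow> real"
  assumes q: "0 \<le> q"
  shows "\<bar>\<Sum>j<k. a j\<bar> powr q \<le> real k powr q * (\<Sum>j<k. \<bar>a j\<bar> powr q)"
proof (cases "k = 0")
  case False
  define M where "M = Max ((\<lambda>j. \<bar>a j\<bar>) ` {..<k})"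
  obtain j0 where j0: "j0 < k" "M = \<bar>a j0\<bar>"
    using Max_in[of "(\<lambda>j. \<bar>a j\<bar>) ` {..<k}"] False unfolding M_def by fastforce
  have "\<bar>\<Sum>j<k. a j\<bar> \<le> (\<Sum>j<k. \<bar>a j\<bar>)" by (rule sum_abs)
  also have "\<dots> \<le> (\<Sum>j<k. M)" unfolding M_def by (intro sum_mono Max_ge) auto
  finally have "\<bar>\<Sum>j<k. a j\<bar> powr q \<le> (real k * M) powr q" using q by (intro powr_mono2) auto
  also have "\<dots> = real k powr q * \<bar>a j0\<bar> powr q" using j0 by (simp add: powr_mult)
  also have "\<dots> \<le> real k powr q * (\<Sum>j<k. \<bar>a j\<bar> powr q)"
    using j0 by (intro mult_left_mono member_le_sum) auto
  finally show ?thesis .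
qed simp

text \<open>The constant k^2 is crude (Minkowski would give 1), but any constant depending only
  on k suffices for limits of finitely many terms.\<close>
lemma lp_norm_sum_le:
  assumes p: "1 \<le> p" and k: "1 \<le> k" and u: "\<And>j. j < k \<Longrightarrow> in_lp p (u j)"
  shows "in_lp p (\<lambda>i. \<Sum>j<k. u j i)
    \<and> lp_norm p (\<lambda>i. \<Sum>j<k. u j i) \<le> real k ^ 2 * (\<Sum>j<k. lp_norm p (u j))"
proof -
  define T where "T = (\<Sum>j<k. lp_norm p (u j))"
  have T0: "0 \<le> T" unfolding T_def using u lp_norm_nonneg by (intro sum_nonneg) blast
  have T_le: "T \<le> real k ^ 2 * T" using k T0 by (simp add: mult_le_cancel_right1 one_le_power)
  show ?thesis
  proof (cases "p = \<infinity>")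
    case True
    have pt: "\<bar>\<Sum>j<k. u j i\<bar> \<le> T" for i
    proof -
      have "\<bar>\<Sum>j<k. u j i\<bar> \<le> (\<Sum>j<k. \<bar>u j i\<bar>)" by (rule sum_abs)
      also have "\<dots> \<le> T" unfolding T_def by (intro sum_mono abs_le_lp_norm[OF p u]) auto
      finally show ?thesis .
    qed
    then have "bdd_above (range (\<lambda>i. \<bar>\<Sum>j<k. u j i\<bar>))" by (intro bdd_aboveI2) auto
    moreover have "Sup (range (\<lambda>i. \<bar>\<Sum>j<k. u j i\<bar>)) \<le> T" using pt by (intro cSUP_least) auto
    ultimately show ?thesis using True T_le by (simp add: in_lp_def lp_norm_def T_def)
  next
    case False
    define q where "q = real_of_ereal p"
    have q: "1 \<le> q" using real_of_ereal_ge_1[OF p False] by (simp add: q_def)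
    have su: "summable (\<lambda>i. \<bar>u j i\<bar> powr q)" if "j < k" for j
      using u[OF that] False by (simp add: in_lp_def q_def)
    have norm_pow: "(\<Sum>i. \<bar>u j i\<bar> powr q) = lp_norm p (u j) powr q" if "j < k" for j
      using False q suminf_nonneg[OF su[OF that]] by (simp add: lp_norm_def q_def powr_powr)
    have ssum: "summable (\<lambda>i. \<Sum>j<k. \<bar>u j i\<bar> powr q)" using su by (intro summable_sum) auto
    have pw: "\<bar>\<Sum>j<k. u j i\<bar> powr q \<le> real k powr q * (\<Sum>j<k. \<bar>u j i\<bar> powr q)" for i
      using q by (intro abs_sum_powr_le) auto
    have ss: "summable (\<lambda>i. \<bar>\<Sum>j<k. u j i\<bar> powr q)"
      by (rule summable_comparison_test'[OF summable_mult[OF ssum]]) (use pw in auto)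
    have "(\<Sum>i. \<bar>\<Sum>j<k. u j i\<bar> powr q) \<le> (\<Sum>i. real k powr q * (\<Sum>j<k. \<bar>u j i\<bar> powr q))"
      by (rule suminf_le[OF pw ss summable_mult[OF ssum]])
    also have "\<dots> = real k powr q * (\<Sum>j<k. lp_norm p (u j) powr q)"
      using suminf_mult[OF ssum] suminf_sum[of "{..<k}" "\<lambda>j i. \<bar>u j i\<bar> powr q"] su norm_pow
      by simp
    also have "\<dots> \<le> real k powr q * (\<Sum>j<k. T powr q)"
      unfolding T_def using u lp_norm_nonneg q
      by (intro mult_left_mono sum_mono powr_mono2 member_le_sum sum_nonneg) auto
    also have "\<dots> = real k powr (q + 1) * T powr q" using k by (simp add: powr_add)
    finally have "(\<Sum>i. \<bar>\<Sum>j<k. u j i\<bar> powr q) powr (1/q) \<le> (real k powr (q + 1) * T powr q) powr (1/q)"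
      using q ss by (intro powr_mono2 suminf_nonneg) auto
    also have "\<dots> = real k powr ((q + 1) / q) * T" using q T0 by (simp add: powr_mult powr_powr)
    also have "\<dots> \<le> real k powr 2 * T"
      using q k T0 by (intro mult_right_mono powr_mono) (auto simp: field_simps)
    finally show ?thesis using False ss k by (simp add: lp_norm_def in_lp_def q_def T_def powr_realpow)
  qed
qed

lemma lp_norm_add_le:
  assumes p: "1 \<le> p" and f: "in_lp p f" and g: "in_lp p g"
  shows "in_lp p (\<lambda>i. f i + g i) \<and> lp_norm p (\<lambda>i. f i + g i) \<le> 4 * (lp_norm p f + lp_norm p g)"
proof -
  define u where "u j = (if j = 0 then f else g)" for j :: nat
  have "j < 2 \<Longrightarrow> in_lp p (u j)" for j using f g by (simp add: u_def)
  from lp_norm_sum_le[where k=2 and u=u, OF p _ this] show ?thesis by (simp add: u_def eval_nat_numeral)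
qed

lemma in_lp_diff:
  assumes p: "1 \<le> p" and f: "in_lp p f" and g: "in_lp p g"
  shows "in_lp p (\<lambda>i. f i - g i)"
proof -
  have "in_lp p (\<lambda>i. - g i)" using lp_dominated[OF p g, of "\<lambda>i. - g i"] by simp
  from lp_norm_add_le[OF p f this] show ?thesis by simp
qed

lemma lp_norm_unit_vector:
  assumes p: "1 \<le> p" and j: "j < d"
  shows "lp_norm p (emb d (\<lambda>j'. if j' = j then 1 else 0)) = 1"
proof -
  have e: "emb d (\<lambda>j'. if j' = j then 1 else 0) = (\<lambda>i. if i = j then 1 else 0)"
    using j by (auto simp: emb_def)
  show ?thesis
  proof (cases "p = \<infinity>")
    case True
    have "Sup (range (\<lambda>i. \<bar>if i = j then 1 else (0::real)\<bar>)) = 1"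
    proof (rule antisym)
      show "Sup (range (\<lambda>i. \<bar>if i = j then 1 else (0::real)\<bar>)) \<le> 1" by (intro cSUP_least) auto
      have "bdd_above (range (\<lambda>i. \<bar>if i = j then 1 else (0::real)\<bar>))"
        by (intro bdd_aboveI2[where M=1]) auto
      then show "1 \<le> Sup (range (\<lambda>i. \<bar>if i = j then 1 else (0::real)\<bar>))"
        using cSUP_upper[of j UNIV "\<lambda>i. \<bar>if i = j then 1 else (0::real)\<bar>"] by simp
    qed
    then show ?thesis using True e by (simp add: lp_norm_def)
  next
    case False
    have "0 < real_of_ereal p" using real_of_ereal_ge_1[OF p False] by simp
    then have "(\<lambda>i. \<bar>if i = j then 1 else (0::real)\<bar> powr real_of_ereal p) = (\<lambda>i. if i = j then 1 else 0)"
      by auto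
    moreover have "(\<lambda>i. if i = j then (1::real) else 0) sums 1"
      using sums_single[of j "\<lambda>_. 1::real"] by simp
    ultimately show ?thesis using False e by (simp add: lp_norm_def sums_iff)
  qed
qed

lemma abs_le_1_of_lp_norm_emb:
  assumes p: "1 \<le> p" and v: "lp_norm p (emb d v) \<le> 1" and j: "j < d"
  shows "\<bar>v j\<bar> \<le> 1"
proof -
  have "in_lp p (emb d v)" by (rule in_lp_finite_support[OF p, of d]) (simp add: emb_def)
  then show ?thesis using abs_le_lp_norm[OF p, of "emb d v" j] v j by (simp add: emb_def)
qed

lemma lp_norm_matvec_le_abs_columns:
  fixes d :: nat
  assumes p: "1 \<le> p" and d: "1 \<le> d" and A: "\<And>j. j < d \<Longrightarrow> in_lp p (\<lambda>i. A i j)"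
    and v: "\<And>j. j < d \<Longrightarrow> \<bar>v j\<bar> \<le> 1"
  shows "in_lp p (\<lambda>i. \<Sum>j<d. A i j * v j)
    \<and> lp_norm p (\<lambda>i. \<Sum>j<d. A i j * v j) \<le> lp_norm p (\<lambda>i. \<Sum>j<d. \<bar>A i j\<bar>)"
proof -
  have "j < d \<Longrightarrow> in_lp p (\<lambda>i. \<bar>A i j\<bar>)" for j using lp_dominated[OF p A, of j] by simp
  from lp_norm_sum_le[where u="\<lambda>j i. \<bar>A i j\<bar>", OF p d this] have g: "in_lp p (\<lambda>i. \<Sum>j<d. \<bar>A i j\<bar>)" by simp
  have "\<bar>\<Sum>j<d. A i j * v j\<bar> \<le> \<bar>\<Sum>j<d. \<bar>A i j\<bar>\<bar>" for i
  proof -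
    have "\<bar>\<Sum>j<d. A i j * v j\<bar> \<le> (\<Sum>j<d. \<bar>A i j * v j\<bar>)" by (rule sum_abs)
    also have "\<dots> \<le> (\<Sum>j<d. \<bar>A i j\<bar>)" using v by (intro sum_mono) (simp add: abs_mult mult_left_le)
    also have "\<dots> = \<bar>\<Sum>j<d. \<bar>A i j\<bar>\<bar>" by (simp add: sum_nonneg)
    finally show ?thesis .
  qed
  then show ?thesis by (rule lp_dominated[OF p g])
qed

lemma op_norm_bdd_above:
  fixes d :: nat
  assumes p: "1 \<le> p" and d: "1 \<le> d" and A: "\<And>j. j < d \<Longrightarrow> in_lp p (\<lambda>i. A i j)"
  shows "bdd_above {lp_norm p (\<lambda>i. \<Sum>j<d. A i j * v j) | v. lp_norm p (emb d v) \<le> 1}"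
proof (rule bdd_aboveI[where M="lp_norm p (\<lambda>i. \<Sum>j<d. \<bar>A i j\<bar>)"])
  fix z assume "z \<in> {lp_norm p (\<lambda>i. \<Sum>j<d. A i j * v j) | v. lp_norm p (emb d v) \<le> 1}"
  then obtain v where z: "z = lp_norm p (\<lambda>i. \<Sum>j<d. A i j * v j)" and v: "lp_norm p (emb d v) \<le> 1"
    by blast
  show "z \<le> lp_norm p (\<lambda>i. \<Sum>j<d. \<bar>A i j\<bar>)"
    using lp_norm_matvec_le_abs_columns[OF p d A abs_le_1_of_lp_norm_emb[OF p v]] z by simp
qed

lemma lp_norm_column_le_op_norm:
  fixes d :: nat
  assumes p: "1 \<le> p" and d: "1 \<le> d" and A: "\<And>j. j < d \<Longrightarrow> in_lp p (\<lambda>i. A i j)" and j: "j < d"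
  shows "lp_norm p (\<lambda>i. A i j) \<le> op_norm p d A"
proof -
  define e where "e = (\<lambda>j'. if j' = j then 1 else (0::real))"
  have "(\<lambda>i. \<Sum>j'<d. A i j' * e j') = (\<lambda>i. A i j)"
    using j by (simp add: e_def if_distrib sum.delta' cong: if_cong)
  moreover have "lp_norm p (emb d e) \<le> 1" using lp_norm_unit_vector[OF p j] by (simp add: e_def)
  ultimately have "lp_norm p (\<lambda>i. A i j) \<in> {lp_norm p (\<lambda>i. \<Sum>j<d. A i j * v j) | v. lp_norm p (emb d v) \<le> 1}"
    by (metis (mono_tags, lifting) mem_Collect_eq)
  then show ?thesis unfolding op_norm_def by (rule cSup_upper[OF _ op_norm_bdd_above[OF p d A]])
qed

lemma lp_norm_matvec_le_op_norm:
  fixes d :: nat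
  assumes p: "1 \<le> p" and d: "1 \<le> d" and A: "\<And>j. j < d \<Longrightarrow> in_lp p (\<lambda>i. A i j)"
    and v: "\<And>j. j < d \<Longrightarrow> \<bar>v j\<bar> \<le> 1"
  shows "in_lp p (\<lambda>i. \<Sum>j<d. A i j * v j)
    \<and> lp_norm p (\<lambda>i. \<Sum>j<d. A i j * v j) \<le> real d ^ 3 * op_norm p d A"
proof -
  have col: "in_lp p (\<lambda>i. A i j * v j) \<and> lp_norm p (\<lambda>i. A i j * v j) \<le> lp_norm p (\<lambda>i. A i j)"
    if "j < d" for j
    using lp_dominated[OF p A[OF that], of "\<lambda>i. A i j * v j"] v[OF that] that
    by (simp add: abs_mult mult_left_le)
  have "(\<Sum>j<d. lp_norm p (\<lambda>i. A i j * v j)) \<le> (\<Sum>j<d. op_norm p d A)"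
    using col lp_norm_column_le_op_norm[OF p d A] by (intro sum_mono) (meson lessThan_iff order_trans)
  then have "real d ^ 2 * (\<Sum>j<d. lp_norm p (\<lambda>i. A i j * v j)) \<le> real d ^ 3 * op_norm p d A"
    by (simp add: mult_left_mono power3_eq_cube power2_eq_square mult.assoc)
  moreover have "in_lp p (\<lambda>i. \<Sum>j<d. A i j * v j)
      \<and> lp_norm p (\<lambda>i. \<Sum>j<d. A i j * v j) \<le> real d ^ 2 * (\<Sum>j<d. lp_norm p (\<lambda>i. A i j * v j))"
    using col by (intro lp_norm_sum_le[OF p d, where u="\<lambda>j i. A i j * v j"]) blast
  ultimately show ?thesis by linarith
qed

lemma lp_converges_affine:
  fixes d :: nat
  assumes p: "1 \<le> p" and d: "1 \<le> d"
    and X: "op_converges p d X" and X_col: "\<And>n j. j < d \<Longrightarrow> in_lp p (\<lambda>i. X n i j)"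
    and B: "lp_converges p B" and B_lp: "\<And>n. in_lp p (B n)"
    and x: "\<And>j. j < d \<Longrightarrow> \<bar>x j\<bar> \<le> 1"
  shows "lp_converges p (\<lambda>n i. (\<Sum>j<d. X n i j * x j) + B n i)"
proof -
  obtain L where L: "\<And>j. j < d \<Longrightarrow> in_lp p (\<lambda>i. L i j)"
    and XL: "(\<lambda>n. op_norm p d (\<lambda>i j. X n i j - L i j)) \<longlonglongrightarrow> 0"
    using X unfolding op_converges_def by blast
  obtain c where c: "in_lp p c" and BL: "(\<lambda>n. lp_norm p (\<lambda>i. B n i - c i)) \<longlonglongrightarrow> 0"
    using B unfolding lp_converges_def by blast
  define y where "y = (\<lambda>i. (\<Sum>j<d. L i j * x j) + c i)"
  have "in_lp p (\<lambda>i. \<Sum>j<d. L i j * x j)"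
    using lp_norm_matvec_le_op_norm[OF p d, where A=L and v=x] L x by blast
  from lp_norm_add_le[OF p this c] have y: "in_lp p y" by (simp add: y_def)
  define R where "R n = 4 * (real d ^ 3 * op_norm p d (\<lambda>i j. X n i j - L i j)
    + lp_norm p (\<lambda>i. B n i - c i))" for n
  have bound: "0 \<le> lp_norm p (\<lambda>i. (\<Sum>j<d. X n i j * x j) + B n i - y i)
      \<and> lp_norm p (\<lambda>i. (\<Sum>j<d. X n i j * x j) + B n i - y i) \<le> R n" for n
  proof -
    have XL_col: "j < d \<Longrightarrow> in_lp p (\<lambda>i. X n i j - L i j)" for j
      by (rule in_lp_diff[OF p X_col L])
    have eq: "(\<lambda>i. (\<Sum>j<d. X n i j * x j) + B n i - y i)
        = (\<lambda>i. (\<Sum>j<d. (X n i j - L i j) * x j) + (B n i - c i))"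
      by (simp add: y_def algebra_simps sum_subtractf)
    have M: "in_lp p (\<lambda>i. \<Sum>j<d. (X n i j - L i j) * x j)
        \<and> lp_norm p (\<lambda>i. \<Sum>j<d. (X n i j - L i j) * x j)
          \<le> real d ^ 3 * op_norm p d (\<lambda>i j. X n i j - L i j)"
      using lp_norm_matvec_le_op_norm[OF p d, where A="\<lambda>i j. X n i j - L i j" and v=x] XL_col x
      by blast
    note S = lp_norm_add_le[OF p conjunct1[OF M] in_lp_diff[OF p B_lp[of n] c]]
    show ?thesis
      using M S lp_norm_nonneg[OF conjunct1[OF S]] unfolding eq R_def by (auto intro: order_trans)
  qed
  have "R \<longlonglongrightarrow> 4 * (real d ^ 3 * 0 + 0)"
    unfolding R_def by (intro tendsto_intros XL BL)
  then have R: "R \<longlonglongrightarrow> 0" by simp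
  have "(\<lambda>n. lp_norm p (\<lambda>i. (\<Sum>j<d. X n i j * x j) + B n i - y i)) \<longlonglongrightarrow> 0"
    by (rule tendsto_sandwich[OF _ _ tendsto_const R]) (use bound in auto)
  then show ?thesis using y unfolding lp_converges_def by blast
qed

lemma sum_indicator_mult:
  "(\<Sum>l<(k::nat). (if i = l then a else 0) * f l) = (if i < k then a * (f i :: real) else 0)"
proof -
  have "(\<Sum>l<k. (if i = l then a else 0) * f l) = (\<Sum>l\<in>{..<k}. if i = l then a * f l else 0)"
    by (rule sum.cong) auto
  then show ?thesis using sum.delta'[of "{..<k}" i "\<lambda>l. a * f l"] by simp
qed

lemma matmul_diagM: "matmul k (diagM k J) A i j = (if i < k then J i * A i j else 0)"
  unfolding matmul_def diagM_def by (simp add: sum_indicator_mult)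

lemma matvec_idM: "matvec k (idM k) v r = (if r < k then v r else 0)"
  unfolding matvec_def idM_def by (simp add: sum_indicator_mult)

lemma matvec_diagM: "matvec k (diagM k J) v r = (if r < k then J r * v r else 0)"
  unfolding matvec_def diagM_def by (simp add: sum_indicator_mult)

lemma matvec_matmul: "matvec k (matmul K A P) v = matvec K A (matvec k P v)"
  unfolding matvec_def matmul_def
  by (simp add: sum_distrib_left sum_distrib_right mult_ac sum.swap[where A="{..<k}"])

lemma prodR_Suc:
  "k \<le> Suc n \<Longrightarrow> prodR m W J k (Suc n) r l = (if r < m (Suc n) then
     J (Suc n) r * matmul (m n) (W (Suc n)) (prodR m W J k n) r l else 0)"
  by (simp add: matmul_diagM)

lemma biasSum_Suc:
  "biasSum m W b J (Suc n) r = (if r < m (Suc n) then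
     J (Suc n) r * ((\<Sum>l<m n. W (Suc n) r l * biasSum m W b J n l) + b (Suc n) r) else 0)"
proof -
  define v where "v i = matvec (m i) (diagM (m i) (J i)) (b i)" for i
  have last: "matvec (m (Suc n)) (prodR m W J (Suc n + 1) (Suc n)) (v (Suc n)) r
      = (if r < m (Suc n) then J (Suc n) r * b (Suc n) r else 0)"
    by (simp add: matvec_idM v_def matvec_diagM)
  have earlier: "matvec (m i) (prodR m W J (i + 1) (Suc n)) (v i) r = (if r < m (Suc n) then
      J (Suc n) r * (\<Sum>l<m n. W (Suc n) r l * matvec (m i) (prodR m W J (i + 1) n) (v i) l) else 0)"
    if "i \<in> {1..n}" for i
  proof -
    have "matvec (m i) (prodR m W J (i + 1) (Suc n)) (v i) r = (if r < m (Suc n) then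
        J (Suc n) r * matvec (m i) (matmul (m n) (W (Suc n)) (prodR m W J (i + 1) n)) (v i) r else 0)"
      using that unfolding matvec_def
      by (simp add: prodR_Suc sum_distrib_left mult.assoc del: prodR.simps)
    then show ?thesis unfolding matvec_matmul by (simp add: matvec_def del: prodR.simps)
  qed
  have "biasSum m W b J (Suc n) r
      = (\<Sum>i\<in>{1..n}. matvec (m i) (prodR m W J (i + 1) (Suc n)) (v i) r)
        + matvec (m (Suc n)) (prodR m W J (Suc n + 1) (Suc n)) (v (Suc n)) r"
    by (simp add: biasSum_def v_def atLeastAtMostSuc_conv del: prodR.simps)
  also have "\<dots> = (if r < m (Suc n) then
      J (Suc n) r * ((\<Sum>l<m n. W (Suc n) r l * biasSum m W b J n l) + b (Suc n) r) else 0)"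
    using earlier last
    by (simp add: biasSum_def v_def sum_distrib_left sum_distrib_right distrib_left
        sum.swap[where A="{Suc 0..n}"] del: prodR.simps)
  finally show ?thesis .
qed

definition activation_pattern ::
  "(nat \<Rightarrow> nat) \<Rightarrow> (nat \<Rightarrow> nat \<Rightarrow> nat \<Rightarrow> real) \<Rightarrow> (nat \<Rightarrow> nat \<Rightarrow> real)
     \<Rightarrow> (nat \<Rightarrow> real) \<Rightarrow> nat \<Rightarrow> nat \<Rightarrow> real" where
  "activation_pattern m W b x n i = (if n = 0 then 0 else
     if 0 < (\<Sum>k<m (n - 1). W n i k * net m W b (n - 1) x k) + b n i then 1 else 0)"

lemma activation_pattern_01: "activation_pattern m W b x n i \<in> {0, 1}"
  by (simp add: activation_pattern_def)

lemma relu_eq_activation_pattern_mult: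
  "relu ((\<Sum>k<m n. W (Suc n) i k * net m W b n x k) + b (Suc n) i)
   = activation_pattern m W b x (Suc n) i * ((\<Sum>k<m n. W (Suc n) i k * net m W b n x k) + b (Suc n) i)"
  by (simp add: activation_pattern_def relu_def)

lemma net_eq_affine:
  "net m W b n x i
   = (\<Sum>j<m 0. embM (m n) (prodR m W (activation_pattern m W b x) 1 n) i j * x j)
     + emb (m n) (biasSum m W b (activation_pattern m W b x) n) i"
proof (induction n arbitrary: i)
  case 0
  show ?case by (simp add: emb_def embM_def biasSum_def idM_def sum_indicator_mult)
next
  case (Suc n)
  define J where "J = activation_pattern m W b x"
  define P where "P = prodR m W J 1 n"
  define B where "B = biasSum m W b J n"
  have IH: "k < m n \<Longrightarrow> net m W b n x k = (\<Sum>j<m 0. P k j * x j) + B k" for k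
    using Suc.IH[of k] by (simp add: embM_def emb_def P_def B_def J_def)
  show ?case
  proof (cases "i < m (Suc n)")
    case True
    have "(\<Sum>k<m n. W (Suc n) i k * net m W b n x k)
        = (\<Sum>k<m n. W (Suc n) i k * ((\<Sum>j<m 0. P k j * x j) + B k))"
      using IH by (intro sum.cong) auto
    also have "\<dots> = (\<Sum>j<m 0. matmul (m n) (W (Suc n)) P i j * x j) + (\<Sum>k<m n. W (Suc n) i k * B k)"
      by (simp add: matmul_def distrib_left sum.distrib sum_distrib_left sum_distrib_right mult_ac
          sum.swap[where A="{..<m n}"])
    finally have layer: "(\<Sum>k<m n. W (Suc n) i k * net m W b n x k) = \<dots>" .
    have "net m W b (Suc n) x i = J (Suc n) i * ((\<Sum>k<m n. W (Suc n) i k * net m W b n x k) + b (Suc n) i)"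
      using True by (simp add: emb_def relu_eq_activation_pattern_mult J_def)
    also have "\<dots> = (\<Sum>j<m 0. embM (m (Suc n)) (prodR m W J 1 (Suc n)) i j * x j)
        + emb (m (Suc n)) (biasSum m W b J (Suc n)) i"
      unfolding layer using True
      by (simp add: embM_def emb_def prodR_Suc biasSum_Suc P_def B_def distrib_left
          sum_distrib_left mult_ac del: prodR.simps)
    finally show ?thesis by (simp add: J_def)
  qed (simp add: emb_def embM_def del: prodR.simps)
qed

theorem theorem3p6:
  fixes p :: ereal and d :: nat and m :: "nat \<Rightarrow> nat"
    and W :: "nat \<Rightarrow> nat \<Rightarrow> nat \<Rightarrow> real" and b :: "nat \<Rightarrow> nat \<Rightarrow> real"
  assumes p: "1 \<le> p"
    and d: "1 \<le> d"
    and m0: "m 0 = d"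
    and mpos: "\<forall>n\<ge>1. 0 < m n"
    and mmono: "\<forall>n\<ge>1. m n \<le> m (Suc n)"
    and lim_W: "\<forall>J :: nat \<Rightarrow> nat \<Rightarrow> real. (\<forall>n i. J n i \<in> {0, 1}) \<longrightarrow>
        op_converges p d (\<lambda>n. embM (m n) (prodR m W J 1 n))"
    and lim_b: "\<forall>J :: nat \<Rightarrow> nat \<Rightarrow> real. (\<forall>n i. J n i \<in> {0, 1}) \<longrightarrow>
        lp_converges p (\<lambda>n. emb (m n) (biasSum m W b J n))"
  shows "\<forall>x :: nat \<Rightarrow> real. (\<forall>j<d. 0 \<le> x j \<and> x j \<le> 1) \<longrightarrow>
           lp_converges p (\<lambda>n. net m W b n x)"
proof (intro allI impI)
  fix x :: "nat \<Rightarrow> real" assume x: "\<forall>j<d. 0 \<le> x j \<and> x j \<le> 1"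
  define J where "J = activation_pattern m W b x"
  have J01: "\<forall>n i. J n i \<in> {0, 1}" unfolding J_def using activation_pattern_01 by blast
  have "lp_converges p (\<lambda>n i. (\<Sum>j<d. embM (m n) (prodR m W J 1 n) i j * x j)
      + emb (m n) (biasSum m W b J n) i)"
  proof (rule lp_converges_affine[OF p d])
    show "in_lp p (\<lambda>i. embM (m n) (prodR m W J 1 n) i j)" for n j
      by (rule in_lp_finite_support[OF p, of "m n"]) (simp add: embM_def)
    show "in_lp p (emb (m n) (biasSum m W b J n))" for n
      by (rule in_lp_finite_support[OF p, of "m n"]) (simp add: emb_def)
  qed (use lim_W lim_b J01 x in auto)
  moreover have "(\<lambda>n. net m W b n x) = (\<lambda>n i. (\<Sum>j<d. embM (m n) (prodR m W J 1 n) i j * x j)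
      + emb (m n) (biasSum m W b J n) i)"
    using net_eq_affine m0 by (simp add: J_def fun_eq_iff)
  ultimately show "lp_converges p (\<lambda>n. net m W b n x)" by simp
qed

end
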